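(* Let $d\ge2$, $j\in[d-1]$, $j\le k\le d$, and $R$ an abelian group with at least two elements. If in a simplicial complex $\mathcal G$ on $[n]$ the 4-tuple $(K,C,w,a)$ forms a copy of $\hat M_{j,k}$, then $H^j(\mathcal G;R)\neq0$.
   Context: $H^j(\mathcal G;R)$ is the $j$-th simplicial cohomology group with coefficients in $R$. A $(j+2)$-set is a $j$-shell in $\mathcal G$ if all its $(j+1)$-subsets are $j$-simplices ($i$-simplices being members of size $i+1$). For $j+1\le k\le d$, $(K,C,w,a)$ is a copy of $\hat M_{j,k}$ if $K$ is a $k$-simplex of $\mathcal G$; $C\subset K$ with $|C|=j$ such that every simplex of $\mathcal G$ containing some set $C\cup\{x\}$, $x\in K\setminus C$, is contained in $K$; $w\in K\setminus C$ and $a\in[n]\setminus K$ with $C\cup\{w,a\}$ a $j$-shell. For $k=j$: $(K,C,w,a)$ is a copy of $\hat M_{j,j}$ if $K$ is an isolated $j$-simplex (contained in no other simplex of $\mathcal G$), $a\in[n]\setminus K$ with $K\cup\{a\}$ a $j$-shell, $C$ is the set of first $j$ vertices of $K$ and $w$ the last vertex of $K$ in increasing order on $[n]$. *)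

theory Defs
  imports Main
begin

definition simplicial_complex :: "nat \<Rightarrow> nat set set \<Rightarrow> bool" where
  "simplicial_complex n G \<longleftrightarrow>
     (\<forall>\<sigma>\<in>G. \<sigma> \<subseteq> {1..n}) \<and> (\<forall>\<sigma>\<in>G. \<forall>\<tau>. \<tau> \<subseteq> \<sigma> \<longrightarrow> \<tau> \<in> G)"

definition simplices :: "nat set set \<Rightarrow> nat \<Rightarrow> nat set set" where
  "simplices G i = {\<sigma> \<in> G. card \<sigma> = i + 1}"

(* i-cochains with coefficients in the abelian group 'r: functions on sets of
   vertices vanishing outside the i-simplices (simplices oriented by the
   increasing order of [n]) *)
definition cochains :: "nat set set \<Rightarrow> nat \<Rightarrow> (nat set \<Rightarrow> 'r::ab_group_add) set" where
  "cochains G i = {f. \<forall>\<sigma>. \<sigma> \<notin> simplices G i \<longrightarrow> f \<sigma> = 0}"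

definition coboundary :: "nat set set \<Rightarrow> nat \<Rightarrow> (nat set \<Rightarrow> 'r::ab_group_add) \<Rightarrow> nat set \<Rightarrow> 'r" where
  "coboundary G i f \<tau> =
     (if \<tau> \<in> simplices G (i + 1) then
        (\<Sum>l<i + 2. (if even l then f (\<tau> - {sorted_list_of_set \<tau> ! l})
                             else - f (\<tau> - {sorted_list_of_set \<tau> ! l})))
      else 0)"

definition cocycles :: "nat set set \<Rightarrow> nat \<Rightarrow> (nat set \<Rightarrow> 'r::ab_group_add) set" where
  "cocycles G i = {f \<in> cochains G i. coboundary G i f = (\<lambda>_. 0)}"

fun coboundaries :: "nat set set \<Rightarrow> nat \<Rightarrow> (nat set \<Rightarrow> 'r::ab_group_add) set" where
  "coboundaries G 0 = {\<lambda>_. 0}"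
| "coboundaries G (Suc i) = coboundary G i ` cochains G i"

(* H^j(G;R) = Z^j / B^j is nonzero iff some j-cocycle is not a j-coboundary.
   The coefficient group R is the type 'r. *)
definition cohomology_nonzero :: "nat set set \<Rightarrow> nat \<Rightarrow> 'r::ab_group_add itself \<Rightarrow> bool" where
  "cohomology_nonzero G j R \<longleftrightarrow> (\<exists>f \<in> (cocycles G j :: (nat set \<Rightarrow> 'r) set). f \<notin> coboundaries G j)"

definition shell :: "nat set set \<Rightarrow> nat \<Rightarrow> nat set \<Rightarrow> bool" where
  "shell G j S \<longleftrightarrow> finite S \<and> card S = j + 2 \<and>
     (\<forall>T. T \<subseteq> S \<and> card T = j + 1 \<longrightarrow> T \<in> simplices G j)"

definition copy_M_hat :: "nat \<Rightarrow> nat set set \<Rightarrow> nat \<Rightarrow> nat \<Rightarrow> nat set \<Rightarrow> nat set \<Rightarrow> nat \<Rightarrow> nat \<Rightarrow> bool" where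
  "copy_M_hat n G j k K C w a \<longleftrightarrow>
     (if k = j then
        K \<in> simplices G j \<and>
        (\<forall>\<sigma>\<in>G. K \<subseteq> \<sigma> \<longrightarrow> \<sigma> = K) \<and>
        a \<in> {1..n} - K \<and> shell G j (insert a K) \<and>
        C = set (take j (sorted_list_of_set K)) \<and>
        w = last (sorted_list_of_set K)
      else
        K \<in> simplices G k \<and>
        C \<subseteq> K \<and> card C = j \<and>
        (\<forall>x\<in>K - C. \<forall>\<sigma>\<in>G. insert x C \<subseteq> \<sigma> \<longrightarrow> \<sigma> \<subseteq> K) \<and>
        w \<in> K - C \<and> a \<in> {1..n} - K \<and> shell G j (insert w (insert a C)))"

end

theory Submission
  imports Defs
begin

text \<open>
  Extend the coboundary to all finite vertex sets by
  \<open>\<delta> g S = (\<Sum>v\<in>S. (-1)^#{u\<in>S. u < v} g (S - {v}))\<close>. Then \<open>\<delta> \<delta> = 0\<close>, and since every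
  face of a shell is a simplex, \<open>\<delta> f\<close> vanishes on every shell when \<open>f\<close> is a coboundary.
  Let \<open>\<psi>\<close> take the value \<open>r \<noteq> 0\<close> on \<open>C\<close> and \<open>0\<close> elsewhere, and let \<open>\<phi>\<close> be \<open>\<delta> \<psi>\<close>
  restricted to the \<open>j\<close>-simplices inside \<open>K\<close>. On a \<open>(j+1)\<close>-simplex inside \<open>K\<close>,
  \<open>\<delta> \<phi> = \<delta> \<delta> \<psi> = 0\<close>; a \<open>(j+1)\<close>-simplex with a face in the support of \<open>\<phi>\<close> contains
  some \<open>C \<union> {x}\<close> with \<open>x \<in> K - C\<close> and hence lies in \<open>K\<close>. So \<open>\<phi>\<close> is a cocycle. But
  of the faces of the shell \<open>C \<union> {w, a}\<close> only \<open>C \<union> {w}\<close> lies in \<open>K\<close>, so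
  \<open>\<delta> \<phi> (C \<union> {w, a}) = \<plusminus>r \<noteq> 0\<close>. For \<open>k = j\<close> the isolated simplex is \<open>K = C \<union> {w}\<close>,
  and isolation is exactly the condition on \<open>C \<union> {w}\<close> used above.
\<close>

definition alt_sign :: "nat \<Rightarrow> 'r::ab_group_add \<Rightarrow> 'r" where
  "alt_sign l x = (if even l then x else - x)"

definition rank_in :: "nat set \<Rightarrow> nat \<Rightarrow> nat" where
  "rank_in S v = card {u \<in> S. u < v}"

definition delta :: "(nat set \<Rightarrow> 'r::ab_group_add) \<Rightarrow> nat set \<Rightarrow> 'r" where
  "delta g S = (\<Sum>v\<in>S. alt_sign (rank_in S v) (g (S - {v})))"

lemma alt_sign_sum: "alt_sign l (sum f A) = (\<Sum>a\<in>A. alt_sign l (f a))"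
  by (simp add: alt_sign_def sum_negf)

lemma alt_sign_alt_sign: "alt_sign l (alt_sign m x) = alt_sign (l + m) x"
  by (simp add: alt_sign_def)

lemma alt_sign_Suc: "alt_sign (Suc l) x = - alt_sign l x"
  by (simp add: alt_sign_def)

lemma alt_sign_0 [simp]: "alt_sign l 0 = 0"
  by (simp add: alt_sign_def)

lemma alt_sign_eq_0_iff [simp]: "alt_sign l x = 0 \<longleftrightarrow> x = 0"
  by (simp add: alt_sign_def)

lemma rank_in_sorted_list_of_set_nth:
  assumes "finite S" "l < card S"
  shows "rank_in S (sorted_list_of_set S ! l) = l"
proof -
  let ?xs = "sorted_list_of_set S"
  have len: "length ?xs = card S" by simp
  have less_iff: "?xs ! i < ?xs ! l \<longleftrightarrow> i < l" if "i < card S" for i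
    using sorted_wrt_nth_less[of "(<)" ?xs] that assms len
    by (metis linorder_neq_iff order.asym strict_sorted_list_of_set)
  have "{u \<in> S. u < ?xs ! l} = (!) ?xs ` {..<l}"
  proof safe
    fix u assume "u \<in> S" "u < ?xs ! l"
    moreover from \<open>u \<in> S\<close> obtain i where "i < card S" "u = ?xs ! i"
      using assms(1) len by (metis in_set_conv_nth set_sorted_list_of_set)
    ultimately show "u \<in> (!) ?xs ` {..<l}" using less_iff by auto
  next
    fix i assume "i < l"
    then show "?xs ! i \<in> S"
      using assms len by (metis nth_mem order.strict_trans set_sorted_list_of_set)
    show "?xs ! i < ?xs ! l" using \<open>i < l\<close> assms less_iff by simp
  qed
  moreover have "inj_on ((!) ?xs) {..<l}"
    using assms len by (intro inj_on_nth) auto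
  ultimately show ?thesis unfolding rank_in_def by (simp add: card_image)
qed

lemma rank_in_remove_greater: "u < v \<Longrightarrow> rank_in (S - {v}) u = rank_in S u"
  unfolding rank_in_def by (intro arg_cong[where f = card]) auto

lemma rank_in_remove_less:
  assumes "finite S" "u \<in> S" "u < v"
  shows "Suc (rank_in (S - {u}) v) = rank_in S v"
proof -
  have "{x \<in> S - {u}. x < v} = {x \<in> S. x < v} - {u}" by auto
  moreover have "u \<in> {x \<in> S. x < v}" "finite {x \<in> S. x < v}" using assms by auto
  ultimately show ?thesis unfolding rank_in_def by (metis card_Suc_Diff1)
qed

lemma delta_eq_sum_sorted_list_of_set:
  assumes "finite S"
  shows "(\<Sum>l<card S. if even l then g (S - {sorted_list_of_set S ! l})
                       else - g (S - {sorted_list_of_set S ! l})) = delta g S"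
proof -
  have "bij_betw ((!) (sorted_list_of_set S)) {..<card S} S"
    by (rule bij_betw_nth) (use assms in auto)
  then have "delta g S = (\<Sum>l<card S. alt_sign (rank_in S (sorted_list_of_set S ! l))
                                         (g (S - {sorted_list_of_set S ! l})))"
    unfolding delta_def by (rule sum.reindex_bij_betw[symmetric])
  then show ?thesis
    by (simp add: assms rank_in_sorted_list_of_set_nth alt_sign_def)
qed

lemma finite_simplex: "\<sigma> \<in> simplices G i \<Longrightarrow> finite \<sigma>"
  unfolding simplices_def using card_eq_0_iff by fastforce

lemma coboundary_eq_delta:
  assumes "\<tau> \<in> simplices G (Suc i)"
  shows "coboundary G i f \<tau> = delta f \<tau>"
proof -
  have "card \<tau> = i + 2" using assms unfolding simplices_def by simp
  then show ?thesis
    using assms delta_eq_sum_sorted_list_of_set[OF finite_simplex[OF assms], of f]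
    unfolding coboundary_def by simp
qed

lemma delta_cong:
  "(\<And>v. v \<in> S \<Longrightarrow> f (S - {v}) = g (S - {v})) \<Longrightarrow> delta f S = delta g S"
  unfolding delta_def by (rule sum.cong) simp_all

lemma delta_nonzero_imp_face:
  "delta g S \<noteq> 0 \<Longrightarrow> \<exists>v\<in>S. g (S - {v}) \<noteq> 0"
  unfolding delta_def by (metis (no_types, lifting) alt_sign_eq_0_iff sum.neutral)

lemma delta_single_face:
  assumes "finite S" "a \<in> S" "\<And>v. v \<in> S \<Longrightarrow> v \<noteq> a \<Longrightarrow> g (S - {v}) = 0"
  shows "delta g S = alt_sign (rank_in S a) (g (S - {a}))"
proof -
  have "delta g S = alt_sign (rank_in S a) (g (S - {a}))
                    + (\<Sum>v\<in>S - {a}. alt_sign (rank_in S v) (g (S - {v})))"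
    unfolding delta_def using assms(1,2) by (rule sum.remove)
  also have "(\<Sum>v\<in>S - {a}. alt_sign (rank_in S v) (g (S - {v}))) = 0"
    using assms(3) by (intro sum.neutral) simp
  finally show ?thesis by simp
qed

lemma delta_delta:
  assumes "finite S"
  shows "delta (delta g) S = 0"
proof -
  define T where "T v u = alt_sign (rank_in S v + rank_in (S - {v}) u) (g (S - {v} - {u}))"
    for v u
  define P where "P = {(v, u). v \<in> S \<and> u \<in> S \<and> u < v}"
  have "finite P" unfolding P_def using assms by (simp add: finite_subset[of _ "S \<times> S"] subset_iff)
  have antisymmetric: "T v u = - T u v" if "(v, u) \<in> P" for v u
  proof -
    have "u \<in> S" "u < v" using that unfolding P_def by auto
    then have "rank_in S v + rank_in (S - {v}) u = Suc (rank_in (S - {u}) v + rank_in S u)"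
      using assms by (simp add: rank_in_remove_greater flip: rank_in_remove_less)
    moreover have "S - {v} - {u} = S - {u} - {v}" by auto
    ultimately show ?thesis unfolding T_def by (simp add: alt_sign_Suc add.commute)
  qed
  have "delta (delta g) S = (\<Sum>v\<in>S. \<Sum>u\<in>S - {v}. T v u)"
    unfolding delta_def T_def by (simp add: alt_sign_sum alt_sign_alt_sign)
  also have "\<dots> = (\<Sum>(v, u)\<in>Sigma S (\<lambda>v. S - {v}). T v u)"
    using assms by (simp add: sum.Sigma)
  also have "Sigma S (\<lambda>v. S - {v}) = P \<union> prod.swap ` P"
    unfolding P_def by force
  also have "(\<Sum>(v, u)\<in>P \<union> prod.swap ` P. T v u) = (\<Sum>(v, u)\<in>P. T v u + T u v)"
    using \<open>finite P\<close>
    by (subst sum.union_disjoint) (auto simp: P_def sum.reindex sum.distrib split_beta)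
  also have "\<dots> = 0"
    using antisymmetric by (intro sum.neutral) auto
  finally show ?thesis .
qed

lemma face_in_simplices:
  assumes "simplicial_complex n G" "\<tau> \<in> simplices G (Suc j)" "v \<in> \<tau>"
  shows "\<tau> - {v} \<in> simplices G j"
  using assms finite_simplex[OF assms(2)]
  unfolding simplicial_complex_def simplices_def by auto

lemma delta_vanishes_on_shell:
  assumes "shell G j S" "f \<in> coboundaries G j"
  shows "delta f S = 0"
proof (cases j)
  case 0
  then show ?thesis using assms(2) by (simp add: delta_def)
next
  case (Suc i)
  then obtain g where g: "f = coboundary G i g" using assms(2) by auto
  have faces: "S - {v} \<in> simplices G (Suc i)" if "v \<in> S" for v
    using assms(1) that Suc unfolding shell_def by auto
  have "delta f S = delta (delta g) S"
    using g faces by (intro delta_cong) (simp add: coboundary_eq_delta)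
  also have "\<dots> = 0" using assms(1) by (simp add: shell_def delta_delta)
  finally show ?thesis .
qed

lemma cocyclesI:
  assumes "\<And>\<sigma>. \<sigma> \<notin> simplices G j \<Longrightarrow> f \<sigma> = 0"
    and "\<And>\<tau>. \<tau> \<in> simplices G (Suc j) \<Longrightarrow> delta f \<tau> = 0"
  shows "f \<in> cocycles G j"
proof -
  have "coboundary G j f \<tau> = 0" for \<tau>
    using assms(2)[of \<tau>] coboundary_eq_delta[of \<tau> G j f]
    by (cases "\<tau> \<in> simplices G (Suc j)") (simp_all add: coboundary_def)
  then show ?thesis using assms(1) by (auto simp: cocycles_def cochains_def)
qed

lemma restricted_delta_in_cocycles:
  assumes G: "simplicial_complex n G"
    and link: "\<forall>x\<in>K - C. \<forall>\<sigma>\<in>G. insert x C \<subseteq> \<sigma> \<longrightarrow> \<sigma> \<subseteq> K"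
    and support: "\<And>\<rho>. \<psi> \<rho> \<noteq> 0 \<Longrightarrow> \<rho> = C"
  shows "(\<lambda>\<sigma>. if \<sigma> \<in> simplices G j \<and> \<sigma> \<subseteq> K then delta \<psi> \<sigma> else 0) \<in> cocycles G j"
    (is "?\<phi> \<in> _")
proof (rule cocyclesI)
  show "?\<phi> \<sigma> = 0" if "\<sigma> \<notin> simplices G j" for \<sigma>
    using that by simp
next
  fix \<tau> assume \<tau>: "\<tau> \<in> simplices G (Suc j)"
  show "delta ?\<phi> \<tau> = 0"
  proof (cases "\<tau> \<subseteq> K")
    case True
    then have "delta ?\<phi> \<tau> = delta (delta \<psi>) \<tau>"
      using face_in_simplices[OF G \<tau>] by (intro delta_cong) auto
    also have "\<dots> = 0"
      using finite_simplex[OF \<tau>] by (rule delta_delta)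
    finally show ?thesis .
  next
    case False
    show ?thesis
    proof (rule ccontr)
      assume "delta ?\<phi> \<tau> \<noteq> 0"
      then obtain v where "v \<in> \<tau>" "?\<phi> (\<tau> - {v}) \<noteq> 0"
        by (blast dest: delta_nonzero_imp_face)
      then have face_in_K: "\<tau> - {v} \<subseteq> K" and "delta \<psi> (\<tau> - {v}) \<noteq> 0"
        by (auto split: if_splits)
      then obtain u where "u \<in> \<tau> - {v}" "\<tau> - {v} - {u} = C"
        using support by (blast dest: delta_nonzero_imp_face)
      then have "u \<in> K - C" "insert u C \<subseteq> \<tau>"
        using face_in_K by auto
      moreover have "\<tau> \<in> G"
        using \<tau> by (simp add: simplices_def)
      ultimately show False
        using link False by blast
    qed
  qed
qed

lemma cohomology_nonzero_if_shell_leaves_star: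
  fixes r :: "'r::ab_group_add"
  assumes G: "simplicial_complex n G"
    and link: "\<forall>x\<in>K - C. \<forall>\<sigma>\<in>G. insert x C \<subseteq> \<sigma> \<longrightarrow> \<sigma> \<subseteq> K"
    and "C \<subseteq> K" "w \<in> K - C" "a \<notin> K"
    and shell: "shell G j (insert w (insert a C))"
    and "r \<noteq> 0"
  shows "cohomology_nonzero G j TYPE('r)"
proof -
  define \<psi> :: "nat set \<Rightarrow> 'r" where "\<psi> \<rho> = (if \<rho> = C then r else 0)" for \<rho>
  define \<phi> where "\<phi> \<sigma> = (if \<sigma> \<in> simplices G j \<and> \<sigma> \<subseteq> K then delta \<psi> \<sigma> else 0)" for \<sigma>
  let ?S = "insert a (insert w C)"
  have S: "finite ?S" "card ?S = j + 2" "insert w (insert a C) = ?S"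
    using shell by (auto simp: shell_def insert_commute)
  have "a \<notin> insert w C"
    using assms(3-5) by auto
  then have "card (insert w C) = j + 1"
    using S by simp
  then have wC: "insert w C \<in> simplices G j"
    using shell S(3) unfolding shell_def by (metis subset_insertI)
  have "delta \<phi> ?S = alt_sign (rank_in ?S a) (\<phi> (insert w C))"
    using S(1) \<open>a \<notin> insert w C\<close> \<open>a \<notin> K\<close>
    by (subst delta_single_face[of _ a]) (auto simp: \<phi>_def)
  also have "\<phi> (insert w C) = delta \<psi> (insert w C)"
    using wC assms(3,4) by (simp add: \<phi>_def)
  also have "\<dots> = alt_sign (rank_in (insert w C) w) r"
    using assms(4) S(1) by (subst delta_single_face[of _ w]) (auto simp: \<psi>_def)
  finally have "delta \<phi> ?S \<noteq> 0"
    using \<open>r \<noteq> 0\<close> by simp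
  then have "\<phi> \<notin> coboundaries G j"
    using shell S(3) delta_vanishes_on_shell by metis
  moreover have "\<phi> \<in> cocycles G j"
    unfolding \<phi>_def
    by (rule restricted_delta_in_cocycles[OF G link]) (simp add: \<psi>_def split: if_splits)
  ultimately show ?thesis
    unfolding cohomology_nonzero_def by blast
qed

lemma insert_last_take_sorted_list_of_set:
  assumes "finite K" "card K = Suc j"
  defines "xs \<equiv> sorted_list_of_set K"
  shows "K = insert (last xs) (set (take j xs))" "last xs \<notin> set (take j xs)"
proof -
  have "xs = take j xs @ [last xs]"
    using assms by (metis append_butlast_last_id butlast_conv_take diff_Suc_1
        length_sorted_list_of_set list.size(3) nat.distinct(1))
  moreover have "distinct xs" "set xs = K"
    using assms by simp_all
  ultimately show "K = insert (last xs) (set (take j xs))" "last xs \<notin> set (take j xs)"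
    by (metis Un_insert_right append_Nil2 list.set(2) set_append,
        metis distinct_append disjoint_iff list.set_intros(1))
qed

theorem corollary4p9:
  fixes n d j k :: nat and G :: "nat set set" and K C :: "nat set" and w a :: nat
  assumes "d \<ge> 2" and "1 \<le> j" and "j \<le> d - 1" and "j \<le> k" and "k \<le> d"
    and "\<exists>x y :: 'r::ab_group_add. x \<noteq> y"
    and "simplicial_complex n G"
    and "copy_M_hat n G j k K C w a"
  shows "cohomology_nonzero G j TYPE('r)"
proof -
  obtain x y :: 'r where "x - y \<noteq> 0"
    using assms(6) by auto
  show ?thesis
  proof (cases "k = j")
    case True
    then have K: "K \<in> simplices G j" and isolated: "\<forall>\<sigma>\<in>G. K \<subseteq> \<sigma> \<longrightarrow> \<sigma> = K"
      and "a \<notin> K" "shell G j (insert a K)"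
      and "C = set (take j (sorted_list_of_set K))" "w = last (sorted_list_of_set K)"
      using assms(8) by (auto simp: copy_M_hat_def)
    then have K_split: "K = insert w C" "w \<notin> C"
      using insert_last_take_sorted_list_of_set[OF finite_simplex[OF K]] K
      by (simp_all add: simplices_def)
    then have link: "\<forall>x\<in>K - C. \<forall>\<sigma>\<in>G. insert x C \<subseteq> \<sigma> \<longrightarrow> \<sigma> \<subseteq> K"
      using isolated by auto
    have "insert w (insert a C) = insert a K"
      using K_split by auto
    then have "C \<subseteq> K" "w \<in> K - C" "a \<notin> K" "shell G j (insert w (insert a C))"
      using K_split \<open>a \<notin> K\<close> \<open>shell G j (insert a K)\<close> by auto
    then show ?thesis
      using \<open>x - y \<noteq> 0\<close> by (rule cohomology_nonzero_if_shell_leaves_star[OF assms(7) link])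
  next
    case False
    then have "\<forall>x\<in>K - C. \<forall>\<sigma>\<in>G. insert x C \<subseteq> \<sigma> \<longrightarrow> \<sigma> \<subseteq> K"
      and "C \<subseteq> K" "w \<in> K - C" "a \<notin> K" "shell G j (insert w (insert a C))"
      using assms(8) by (simp_all add: copy_M_hat_def)
    then show ?thesis
      using \<open>x - y \<noteq> 0\<close> by (rule cohomology_nonzero_if_shell_leaves_star[OF assms(7)])
  qed
qed

end
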